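(* Let $\mu>0$, $k>0$, $y(x)=-kx^2$, and let $x_p$, $m(x)$ and $N(x,\xi)$ be as in the context. Then $\partial_\xi N(x,\xi)<0$ for every $x\in(0,x_p)$ and every $\xi\in(0,1)$.
   Context: Let $g(u)=u^2(1-u)$ and $G(u)=u^3/3-u^4/4$ for $u\in[0,1]$. If $k^2\le\mu/6$ set $x_p=1$; otherwise let $x_p\in(0,1)$ be the unique $x\in(0,1)$ with $y(x)^2=2\mu G(x)$. For $x\in(0,x_p)$, $m(x)\in(0,x)$ is the unique number with $2\mu G(m(x))=2\mu G(x)-y(x)^2$; $m$ is $\mathcal{C}^1$. Define, for $x\in(0,x_p)$ and $\xi\in[0,1]$, writing $z=x-(x-m(x))\xi$, $$N(x,\xi)=(1-m'(x))\bigl(y(x)^2+2\mu(G(z)-G(x))\bigr)-(x-m(x))\Bigl(y(x)y'(x)+\mu\bigl(g(z)\,(1-(1-m'(x))\xi)-g(x)\bigr)\Bigr).$$ *)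

theory Defs
  imports "HOL-Analysis.Analysis"
begin

definition g :: "real \<Rightarrow> real" where
  "g u = u^2 * (1 - u)"

definition G :: "real \<Rightarrow> real" where
  "G u = u^3 / 3 - u^4 / 4"

definition yk :: "real \<Rightarrow> real \<Rightarrow> real" where
  "yk k x = - k * x^2"

definition xp :: "real \<Rightarrow> real \<Rightarrow> real" where
  "xp \<mu> k = (if k^2 \<le> \<mu> / 6 then 1
     else (THE x. 0 < x \<and> x < 1 \<and> (yk k x)^2 = 2 * \<mu> * G x))"

definition mfun :: "real \<Rightarrow> real \<Rightarrow> real \<Rightarrow> real" where
  "mfun \<mu> k x = (THE m. 0 < m \<and> m < x \<and>
      2 * \<mu> * G m = 2 * \<mu> * G x - (yk k x)^2)"

definition Nfun :: "real \<Rightarrow> real \<Rightarrow> real \<Rightarrow> real \<Rightarrow> real" where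
  "Nfun \<mu> k x \<xi> =
    (let m = mfun \<mu> k x; m' = deriv (mfun \<mu> k) x;
         y = yk k x; y' = deriv (yk k) x;
         z = x - (x - m) * \<xi>
     in (1 - m') * (y^2 + 2 * \<mu> * (G z - G x))
        - (x - m) * (y * y' + \<mu> * (g z * (1 - (1 - m') * \<xi>) - g x)))"

end

theory Submission
  imports Defs
begin

(* Put z = x - (x - m) \<xi>, so that z runs from x down to m = m(x). Differentiating N in \<xi> gives
   \<mu> (x - m) [g'(z) ((z - m) + m' (x - z)) - (1 - m') g(z)].
   Implicit differentiation of 2 \<mu> G(m) = 2 \<mu> G(x) - y(x)^2 yields 3 x g(m) m' = 12 G(m) - x^3,
   and multiplying the bracket by 3 x g(m) > 0 turns it into the polynomial
   z (x - m) [(x - m)(x + 2m) U + 3 m^2 W], where U and W are affine in x and negative at both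
   ends of [z, 1]; hence the bracket is negative whenever 0 < m < z < x < 1. *)

lemma G_has_real_derivative: "(G has_real_derivative g u) (at u)"
  unfolding G_def g_def
  by (rule derivative_eq_intros refl | simp)+ (simp add: algebra_simps power2_eq_square power3_eq_cube)

lemma continuous_on_G: "continuous_on S G"
  unfolding G_def by (intro continuous_intros) auto

lemma strict_mono_on_G: "strict_mono_on {0..1} G"
proof (rule strict_mono_onI)
  fix a b :: real
  assume "a \<in> {0..1}" "b \<in> {0..1}" "a < b"
  then show "G a < G b"
  proof (intro DERIV_pos_imp_increasing_open[OF \<open>a < b\<close>] continuous_on_G)
    fix t assume "a < t" "t < b"
    with \<open>a \<in> {0..1}\<close> \<open>b \<in> {0..1}\<close> have "g t > 0"
      unfolding g_def by simp
    then show "\<exists>y. (G has_real_derivative y) (at t) \<and> 0 < y"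
      using G_has_real_derivative by blast
  qed
qed

lemma inj_on_G: "inj_on G {0..1}"
  using strict_mono_on_G by (rule strict_mono_on_imp_inj_on)

abbreviation G_inv :: "real \<Rightarrow> real" where
  "G_inv \<equiv> the_inv_into {0..1} G"

lemma G_inv_G: "u \<in> {0..1} \<Longrightarrow> G_inv (G u) = u"
  using inj_on_G by (rule the_inv_into_f_f)

lemma G_inv_bounds:
  assumes "0 < s" "s < 1/12"
  shows "G (G_inv s) = s" "0 < G_inv s" "G_inv s < 1"
proof -
  have "G 0 \<le> s" "s \<le> G 1"
    using assms by (auto simp: G_def)
  then obtain u where u: "0 \<le> u" "u \<le> 1" "G u = s"
    using IVT'[of G 0 s 1] continuous_on_G by auto
  then have "G_inv s = u"
    using G_inv_G by auto
  moreover have "u \<noteq> 0" "u \<noteq> 1"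
    using u assms by (auto simp: G_def)
  ultimately show "G (G_inv s) = s" "0 < G_inv s" "G_inv s < 1"
    using u by auto
qed

lemma G_inv_has_real_derivative:
  assumes "0 < s" "s < 1/12"
  shows "(G_inv has_real_derivative inverse (g (G_inv s))) (at s)"
proof (rule DERIV_inverse_function[where a = 0 and b = "1/12"])
  define u where "u = G_inv s"
  have u: "0 < u" "u < 1" "G u = s"
    using G_inv_bounds[OF assms] unfolding u_def by auto
  show "(G has_real_derivative g (G_inv s)) (at (G_inv s))"
    by (rule G_has_real_derivative)
  show "g (G_inv s) \<noteq> 0"
    using u unfolding u_def g_def by simp
  have "isCont G_inv (G u)"
    by (rule isCont_inverse_function2[of "u/2" u "(1 + u)/2"])
       (use u G_inv_G G_has_real_derivative[THEN DERIV_isCont] in auto)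
  then show "isCont G_inv s"
    using u by simp
qed (use assms G_inv_bounds in auto)

lemma yk_sq_minus_G:
  "(yk k x)^2 - 2*\<mu>*G x = x^3 * (x*(3*\<mu> + 6*k^2) - 4*\<mu>) / 6"
  unfolding yk_def G_def by (simp add: algebra_simps power2_eq_square power3_eq_cube power4_eq_xxxx)

lemma below_xp:
  fixes \<mu> k x :: real
  assumes "\<mu> > 0" "0 < x" "x < xp \<mu> k"
  shows "x < 1" "(yk k x)^2 < 2*\<mu>*G x"
proof -
  have den: "3*\<mu> + 6*k^2 > 0"
    using assms by (simp add: add_pos_nonneg)
  have "x < 1 \<and> x*(3*\<mu> + 6*k^2) < 4*\<mu>"
  proof (cases "k^2 \<le> \<mu>/6")
    case True
    then have "x < 1"
      using assms by (simp add: xp_def)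
    then have "x*(3*\<mu> + 6*k^2) < 1*(3*\<mu> + 6*k^2)"
      using den by (intro mult_strict_right_mono) auto
    with True \<open>x < 1\<close> show ?thesis
      by simp
  next
    case False
    define x0 where "x0 = 4*\<mu> / (3*\<mu> + 6*k^2)"
    have x0: "0 < x0" "x0 < 1" "x0*(3*\<mu> + 6*k^2) = 4*\<mu>"
      unfolding x0_def using den False assms by (auto simp: field_simps)
    have "xp \<mu> k = x0"
      unfolding xp_def using False
    proof (simp, intro the_equality)
      show "0 < x0 \<and> x0 < 1 \<and> (yk k x0)^2 = 2*\<mu>*G x0"
        using x0 yk_sq_minus_G[of k x0 \<mu>] by simp
    next
      fix y assume "0 < y \<and> y < 1 \<and> (yk k y)^2 = 2*\<mu>*G y"
      then have "y*(3*\<mu> + 6*k^2) = x0*(3*\<mu> + 6*k^2)"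
        using x0 yk_sq_minus_G[of k y \<mu>] by simp
      then show "y = x0"
        using den by simp
    qed
    with assms have "x < x0"
      by simp
    then have "x*(3*\<mu> + 6*k^2) < x0*(3*\<mu> + 6*k^2)"
      using den by simp
    with x0 \<open>x < x0\<close> show ?thesis
      by simp
  qed
  then have "x^3 * (x*(3*\<mu> + 6*k^2) - 4*\<mu>) < 0"
    using assms by (simp add: mult_pos_neg)
  with \<open>x < 1 \<and> _\<close> show "x < 1" "(yk k x)^2 < 2*\<mu>*G x"
    using yk_sq_minus_G[of k x \<mu>] by auto
qed

definition mfun_level :: "real \<Rightarrow> real \<Rightarrow> real \<Rightarrow> real" where
  "mfun_level \<mu> k x = G x - (yk k x)^2 / (2*\<mu>)"

lemma mfun_level_bounds:
  fixes \<mu> k x :: real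
  assumes "\<mu> > 0" "k \<noteq> 0" "0 < x" "x < xp \<mu> k"
  shows "0 < mfun_level \<mu> k x" "mfun_level \<mu> k x < G x" "G x < 1/12"
proof -
  have x: "x < 1" "(yk k x)^2 < 2*\<mu>*G x"
    using below_xp[OF assms(1,3,4)] by auto
  have "(yk k x)^2 > 0"
    using assms unfolding yk_def by simp
  with x assms show "0 < mfun_level \<mu> k x" "mfun_level \<mu> k x < G x"
    unfolding mfun_level_def by (auto simp: field_simps)
  show "G x < 1/12"
    using strict_mono_on_less[OF strict_mono_on_G, of x 1] x assms by (simp add: G_def)
qed

lemma mfun_below_xp:
  fixes \<mu> k x :: real
  assumes "\<mu> > 0" "k \<noteq> 0" "0 < x" "x < xp \<mu> k"
  shows "mfun \<mu> k x = G_inv (mfun_level \<mu> k x)"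
    and "0 < mfun \<mu> k x" "mfun \<mu> k x < x"
    and "G (mfun \<mu> k x) = mfun_level \<mu> k x"
proof -
  define s where "s = mfun_level \<mu> k x"
  define u where "u = G_inv s"
  note s = mfun_level_bounds[OF assms, folded s_def]
  have "x < 1"
    using below_xp[OF assms(1,3,4)] by simp
  have u: "G u = s" "0 < u" "u < 1"
    using G_inv_bounds[of s] s unfolding u_def by auto
  have "u < x"
    using strict_mono_on_less[OF strict_mono_on_G, of u x] u s assms \<open>x < 1\<close> by auto
  have level: "2*\<mu>*G u = 2*\<mu>*G x - (yk k x)^2"
    using u assms unfolding s_def mfun_level_def by (simp add: field_simps)
  have "mfun \<mu> k x = u"
    unfolding mfun_def
  proof (rule the_equality)
    show "0 < u \<and> u < x \<and> 2*\<mu>*G u = 2*\<mu>*G x - (yk k x)^2"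
      using u \<open>u < x\<close> level by simp
  next
    fix v assume v: "0 < v \<and> v < x \<and> 2*\<mu>*G v = 2*\<mu>*G x - (yk k x)^2"
    then have "2*\<mu>*G v = 2*\<mu>*G u"
      using level by simp
    then have "G v = G u"
      using assms by simp
    then show "v = u"
      using inj_onD[OF inj_on_G] u v \<open>x < 1\<close> by auto
  qed
  with u \<open>u < x\<close> show "mfun \<mu> k x = G_inv (mfun_level \<mu> k x)"
    and "0 < mfun \<mu> k x" "mfun \<mu> k x < x"
    and "G (mfun \<mu> k x) = mfun_level \<mu> k x"
    unfolding u_def s_def by auto
qed

lemma mfun_has_real_derivative:
  fixes \<mu> k x :: real
  assumes "\<mu> > 0" "k \<noteq> 0" "0 < x" "x < xp \<mu> k"
  shows "(mfun \<mu> k has_real_derivative (g x - 2*k^2*x^3/\<mu>) / g (mfun \<mu> k x)) (at x)"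
proof -
  have "mfun_level \<mu> k = (\<lambda>t. G t - k^2 * t^4 / (2*\<mu>))"
    unfolding mfun_level_def yk_def by (simp add: fun_eq_iff power_mult_distrib)
  moreover have "((\<lambda>t. G t - k^2 * t^4 / (2*\<mu>)) has_real_derivative g x - 2*k^2*x^3/\<mu>) (at x)"
    using assms by (auto intro!: derivative_eq_intros G_has_real_derivative)
  ultimately have "(mfun_level \<mu> k has_real_derivative g x - 2*k^2*x^3/\<mu>) (at x)"
    by simp
  then have "((\<lambda>t. G_inv (mfun_level \<mu> k t)) has_real_derivative
      inverse (g (mfun \<mu> k x)) * (g x - 2*k^2*x^3/\<mu>)) (at x)"
    using DERIV_chain2[OF G_inv_has_real_derivative] mfun_level_bounds[OF assms]
      mfun_below_xp(1)[OF assms] by simp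
  then have "(mfun \<mu> k has_real_derivative inverse (g (mfun \<mu> k x)) * (g x - 2*k^2*x^3/\<mu>)) (at x)"
  proof (rule has_field_derivative_transform_within_open[where S = "{0<..<xp \<mu> k}"])
    fix t assume "t \<in> {0<..<xp \<mu> k}"
    then show "G_inv (mfun_level \<mu> k t) = mfun \<mu> k t"
      using mfun_below_xp(1)[OF assms(1,2)] by auto
  qed (use assms in auto)
  then show ?thesis
    by (simp add: field_simps)
qed

lemma deriv_mfun_identity:
  fixes \<mu> k x :: real
  assumes "\<mu> > 0" "k \<noteq> 0" "0 < x" "x < xp \<mu> k"
  defines "m \<equiv> mfun \<mu> k x"
  shows "3*x*g m * deriv (mfun \<mu> k) x = 12*G m - x^3"
proof -
  have "g m > 0"
    using mfun_below_xp(2,3)[OF assms(1-4)] below_xp[OF assms(1,3,4)]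
    unfolding m_def g_def by simp
  have "k^2*x^4 = 2*\<mu>*(G x - G m)"
    using mfun_below_xp(4)[OF assms(1-4)] assms(1)
    unfolding m_def mfun_level_def yk_def by (simp add: field_simps power_mult_distrib)
  have "3*x*g m * deriv (mfun \<mu> k) x = 3*x*(g x - 2*k^2*x^3/\<mu>)"
    using DERIV_imp_deriv[OF mfun_has_real_derivative[OF assms(1-4)]] \<open>g m > 0\<close>
    unfolding m_def by simp
  also have "\<dots> = 3*x*g x - 6*(k^2*x^4)/\<mu>"
    by (simp add: algebra_simps power2_eq_square power3_eq_cube power4_eq_xxxx)
  also have "\<dots> = 3*x*g x - 12*(G x - G m)"
    using \<open>k^2*x^4 = _\<close> assms(1) by simp
  also have "\<dots> = 12*G m - x^3"
    by (simp add: G_def g_def algebra_simps power2_eq_square power3_eq_cube power4_eq_xxxx)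
  finally show ?thesis .
qed

lemma affine_neg_on_segment:
  fixes a b p q t :: real
  assumes "p \<le> t" "t < q" "a + b*p < 0" "a + b*q \<le> 0"
  shows "a + b*t < 0"
proof -
  have "(q - p) * (a + b*t) = (q - t) * (a + b*p) + (t - p) * (a + b*q)"
    by (simp add: algebra_simps)
  also have "\<dots> < 0"
    using assms mult_pos_neg[of "q - t" "a + b*p"] mult_nonneg_nonpos[of "t - p" "a + b*q"]
    by linarith
  finally show ?thesis
    using assms by (simp add: mult_less_0_iff)
qed

lemma slope_poly_U_neg:
  fixes z x :: real
  assumes "0 < z" "z \<le> x" "x < 1"
  shows "z - 2*z^2 + (3*z - 2)*x < 0"
proof (rule affine_neg_on_segment[OF assms(2,3)])
  show "z - 2*z^2 + (3*z - 2)*z < 0"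
    using assms by (simp add: power2_eq_square algebra_simps)
  have "z - 2*z^2 + (3*z - 2)*1 = - 2*(1 - z)^2"
    by (simp add: power2_eq_square algebra_simps)
  then show "z - 2*z^2 + (3*z - 2)*1 \<le> 0"
    by simp
qed

lemma slope_poly_W_neg:
  fixes m z x :: real
  assumes "0 < m" "m < z" "z \<le> x" "x < 1"
  shows "(2 - m)*z*(1 - 2*z) + (3*z - 2)*x < 0"
proof (rule affine_neg_on_segment[OF assms(3,4)])
  have "- z + (2*z - 1)*m < 0"
  proof (rule affine_neg_on_segment[of 0 m z])
    show "- z + (2*z - 1)*z \<le> 0"
      using assms by (simp add: algebra_simps power2_eq_square mult_le_cancel_left1)
  qed (use assms in auto)
  then have "z * (- z + (2*z - 1)*m) < 0"
    using assms by (simp add: mult_pos_neg)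
  then show "(2 - m)*z*(1 - 2*z) + (3*z - 2)*z < 0"
    by (simp add: algebra_simps power2_eq_square)
  have "3*z - 2 + 2*z*(1 - 2*z) + (- z*(1 - 2*z))*m < 0"
  proof (rule affine_neg_on_segment[of 0 m z])
    have "3*z - 2 + 2*z*(1 - 2*z) = - 4*(z - 5/8)^2 - 7/16"
      by (simp add: algebra_simps power2_eq_square)
    then show "3*z - 2 + 2*z*(1 - 2*z) + (- z*(1 - 2*z))*0 < 0"
      using zero_le_power2[of "z - 5/8"] by linarith
    have "3*z - 2 + 2*z*(1 - 2*z) + (- z*(1 - 2*z))*z = (z - 1)*(2*(z - 3/4)^2 + 7/8)"
      by (simp add: algebra_simps power2_eq_square power3_eq_cube)
    also have "\<dots> \<le> 0"
      using assms by (intro mult_nonpos_nonneg) auto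
    finally show "3*z - 2 + 2*z*(1 - 2*z) + (- z*(1 - 2*z))*z \<le> 0" .
  qed (use assms in auto)
  then show "(2 - m)*z*(1 - 2*z) + (3*z - 2)*1 \<le> 0"
    by (simp add: algebra_simps)
qed

lemma slope_factor_neg:
  fixes m z x m' :: real
  assumes "0 < m" "m < z" "z < x" "x < 1"
    and m': "3*x*g m * m' = 12*G m - x^3"
  shows "(2*z - 3*z^2)*((z - m) + m'*(x - z)) - (1 - m')*g z < 0"
proof -
  define U where "U = z - 2*z^2 + (3*z - 2)*x"
  define W where "W = (2 - m)*z*(1 - 2*z) + (3*z - 2)*x"
  define K where "K = 3*x*g m"
  have "U < 0" "W < 0"
    using slope_poly_U_neg[of z x] slope_poly_W_neg[of m z x] assms unfolding U_def W_def by auto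
  then have "(x - m)*(x + 2*m)*U + 3*m^2*W < 0"
    using assms by (intro add_neg_neg mult_pos_neg) auto
  then have neg: "z*(x - m)*((x - m)*(x + 2*m)*U + 3*m^2*W) < 0"
    using assms by (intro mult_pos_neg) auto
  have "K * ((2*z - 3*z^2)*((z - m) + m'*(x - z)) - (1 - m')*g z)
      = K * ((2*z - 3*z^2)*(z - m) - g z) + (K * m') * (g z + (2*z - 3*z^2)*(x - z))"
    by (simp add: algebra_simps)
  also have "\<dots> = K * ((2*z - 3*z^2)*(z - m) - g z) + (12*G m - x^3) * (g z + (2*z - 3*z^2)*(x - z))"
    using m' unfolding K_def by simp
  also have "\<dots> = z*(x - m)*((x - m)*(x + 2*m)*U + 3*m^2*W)"
    unfolding K_def U_def W_def g_def G_def by algebra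
  finally have "K * ((2*z - 3*z^2)*((z - m) + m'*(x - z)) - (1 - m')*g z) < 0"
    using neg by simp
  moreover have "K > 0"
    using assms unfolding K_def g_def by simp
  ultimately show ?thesis
    by (simp add: mult_less_0_iff)
qed

lemma Nfun_has_real_derivative:
  fixes \<mu> k x \<xi> :: real
  defines "m \<equiv> mfun \<mu> k x" and "m' \<equiv> deriv (mfun \<mu> k) x" and "z \<equiv> x - (x - mfun \<mu> k x)*\<xi>"
  shows "((\<lambda>t. Nfun \<mu> k x t) has_real_derivative
           \<mu>*(x - m)*((2*z - 3*z^2)*((z - m) + m'*(x - z)) - (1 - m')*g z)) (at \<xi>)"
  unfolding Nfun_def Let_def m_def[symmetric] m'_def[symmetric] G_def g_def
  by (auto intro!: derivative_eq_intros) (unfold z_def, fold m_def, algebra)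

theorem lemmaA1:
  fixes \<mu> k x \<xi> :: real
  assumes "\<mu> > 0" and "k > 0"
    and "0 < x" and "x < xp \<mu> k"
    and "0 < \<xi>" and "\<xi> < 1"
  shows "\<exists>D. ((\<lambda>t. Nfun \<mu> k x t) has_real_derivative D) (at \<xi>) \<and> D < 0"
proof -
  define m where "m = mfun \<mu> k x"
  define m' where "m' = deriv (mfun \<mu> k) x"
  define z where "z = x - (x - m)*\<xi>"
  have "k \<noteq> 0"
    using assms(2) by simp
  note xp = assms(1) \<open>k \<noteq> 0\<close> assms(3,4)
  have m: "0 < m" "m < x"
    using mfun_below_xp(2,3)[OF xp] unfolding m_def by auto
  have "0 < (x - m)*\<xi>" "(x - m)*\<xi> < x - m"
    using m assms(5,6) by auto
  then have z: "m < z" "z < x"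
    unfolding z_def by auto
  have "(2*z - 3*z^2)*((z - m) + m'*(x - z)) - (1 - m')*g z < 0"
  proof (rule slope_factor_neg)
    show "x < 1"
      using below_xp(1)[OF assms(1,3,4)] .
    show "3*x*g m * m' = 12*G m - x^3"
      using deriv_mfun_identity[OF xp] unfolding m_def m'_def .
  qed (use m z in auto)
  then have "\<mu>*(x - m)*((2*z - 3*z^2)*((z - m) + m'*(x - z)) - (1 - m')*g z) < 0"
    using assms(1) m by (intro mult_pos_neg) auto
  then show ?thesis
    using Nfun_has_real_derivative[of \<mu> k x \<xi>] unfolding m_def m'_def z_def by blast
qed

end
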